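(* In the fixed-base chain setting of the context, let $\delta\boldsymbol{\pi}\in\mathbb{R}^{10N}$ and let $i\ge 2$ be such that $\delta\mathbf{I}_j=\mathbf{0}$ for all $j>i$, where $\delta\mathbf I_j=[\delta\boldsymbol\pi_j]^\wedge$. Define $\delta\mathbf{I}_{i-1}'=\delta\mathbf{I}_{i-1}+({}^{J_i}\mathbf{X}_{i-1})^\top\delta\mathbf{I}_i\,{}^{J_i}\mathbf{X}_{i-1}$ and $\Delta{}^{J_i}\mathbf{I}_i(q_i)={}^{i}\mathbf{X}_{J_i}(q_i)^\top\delta\mathbf{I}_i\,{}^{i}\mathbf{X}_{J_i}(q_i)-\delta\mathbf{I}_i$, and write ${}^{J_i}\mathbf{v}_{i-1}={}^{J_i}\mathbf{X}_{i-1}\mathbf{v}_{i-1}$. Then $\sum_{j=1}^{N}\mathbf{v}_j^\top\delta\mathbf{I}_j\mathbf{v}_j=0$ for all $\mathbf{q},\dot{\mathbf{q}}\in\mathbb R^N$ if and only if all three of the following hold for all $\mathbf{q},\dot{\mathbf{q}}$: (a) $\boldsymbol{\Phi}_i^\top\delta\mathbf{I}_i\mathbf{v}_i=0$; (b) ${}^{J_i}\mathbf{v}_{i-1}^\top\,\Delta{}^{J_i}\mathbf{I}_i(q_i)\,{}^{J_i}\mathbf{v}_{i-1}=0$; (c) $\sum_{j=1}^{i-2}\mathbf{v}_j^\top\delta\mathbf{I}_j\mathbf{v}_j+\mathbf{v}_{i-1}^\top\delta\mathbf{I}_{i-1}'\mathbf{v}_{i-1}=0$.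
   Context: Spatial notation. For $\mathbf{x}\in\mathbb{R}^3$, $\mathbf{S}(\mathbf{x})$ is the skew-symmetric matrix with $\mathbf{S}(\mathbf{x})\mathbf{y}=\mathbf{x}\times\mathbf{y}$. For $\mathbf{v}=[\boldsymbol{\omega};\mathbf{u}]\in\mathbb{R}^6$, $(\mathbf{v}\times)=\begin{bmatrix}\mathbf{S}(\boldsymbol{\omega})&\mathbf{0}\\ \mathbf{S}(\mathbf{u})&\mathbf{S}(\boldsymbol{\omega})\end{bmatrix}$. A spatial transform is a matrix $\begin{bmatrix}\mathbf{R}&\mathbf{0}\\-\mathbf{R}\mathbf{S}(\mathbf{p})&\mathbf{R}\end{bmatrix}$ with $\mathbf{R}\in SO(3)$, $\mathbf{p}\in\mathbb{R}^3$. Inertial parameters $\boldsymbol{\pi}=[m,h_x,h_y,h_z,I_{xx},I_{xy},I_{xz},I_{yy},I_{yz},I_{zz}]^\top\in\mathbb{R}^{10}$; $[\boldsymbol{\pi}]^{\wedge}=\begin{bmatrix}\bar{\mathbf{I}}&\mathbf{S}(\mathbf{h})\\ \mathbf{S}(\mathbf{h})^{\top}&m\mathbf{1}_3\end{bmatrix}$ with $\mathbf{h}=[h_x,h_y,h_z]^\top$ and $\bar{\mathbf{I}}$ the symmetric $3\times3$ matrix with entries $I_{xx},I_{xy},\ldots$. Fixed-base chain. Body $0$ is the fixed ground with $\mathbf{v}_0=\mathbf{0}$. For $i=1,\ldots,N$, joint $i$ has coordinate $q_i\in\mathbb R$ and $\mathbf{v}_i={}^{i}\mathbf{X}_{i-1}(q_i)\mathbf{v}_{i-1}+\boldsymbol{\Phi}_i\dot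 q_i$, with $\boldsymbol{\Phi}_i\in\mathbb{R}^6$ fixed, ${}^{i}\mathbf{X}_{i-1}(q_i)={}^{i}\mathbf{X}_{J_i}(q_i)\,{}^{J_i}\mathbf{X}_{i-1}$, ${}^{J_i}\mathbf{X}_{i-1}$ a constant spatial transform, and ${}^{i}\mathbf{X}_{J_i}(q_i)$ a spatial transform with ${}^{i}\mathbf{X}_{J_i}(0)=\mathbf{1}_6$ and $\frac{d}{dq_i}{}^{i}\mathbf{X}_{J_i}(q_i)=-(\boldsymbol{\Phi}_i\times){}^{i}\mathbf{X}_{J_i}(q_i)$. $\mathbf q=(q_1,\dots,q_N)$ and $\delta\boldsymbol{\pi}=[\delta\boldsymbol{\pi}_1^\top,\ldots,\delta\boldsymbol{\pi}_N^\top]^\top$. *)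

theory Defs
  imports "HOL-Analysis.Analysis"
begin

text \<open>Spatial (6D) vectors are real^6: components 1,2,3 are the angular part omega,
components 4,5,6 the linear part u.  Inertial parameters are real^10 with
components 1..10 = m, hx, hy, hz, Ixx, Ixy, Ixz, Iyy, Iyz, Izz (component 10 = index 0).\<close>

definition top3 :: "real^6 \<Rightarrow> real^3" where
  "top3 v = vector [v$1, v$2, v$3]"

definition bot3 :: "real^6 \<Rightarrow> real^3" where
  "bot3 v = vector [v$4, v$5, v$6]"

definition stack6 :: "real^3 \<Rightarrow> real^3 \<Rightarrow> real^6" where
  "stack6 x y = vector [x$1, x$2, x$3, y$1, y$2, y$3]"

definition blockmat :: "real^3^3 \<Rightarrow> real^3^3 \<Rightarrow> real^3^3 \<Rightarrow> real^3^3 \<Rightarrow> real^6^6" where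
  "blockmat A B C D =
     matrix (\<lambda>v. stack6 (A *v top3 v + B *v bot3 v) (C *v top3 v + D *v bot3 v))"

definition skew :: "real^3 \<Rightarrow> real^3^3" where
  "skew x = matrix (\<lambda>y. cross3 x y)"

definition scross :: "real^6 \<Rightarrow> real^6^6" where
  "scross v = blockmat (skew (top3 v)) 0 (skew (bot3 v)) (skew (top3 v))"

definition spatial_transform :: "real^6^6 \<Rightarrow> bool" where
  "spatial_transform X \<longleftrightarrow>
     (\<exists>R p. rotation_matrix R \<and> X = blockmat R 0 (- (R ** skew p)) R)"

definition inertia_hat :: "real^10 \<Rightarrow> real^6^6" where
  "inertia_hat \<pi> =
     (let m = \<pi>$1; h = vector [\<pi>$2, \<pi>$3, \<pi>$4] :: real^3;
          Ibar = vector [vector [\<pi>$5, \<pi>$6, \<pi>$7],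
                         vector [\<pi>$6, \<pi>$8, \<pi>$9],
                         vector [\<pi>$7, \<pi>$9, \<pi>$10]] :: real^3^3
      in blockmat Ibar (skew h) (transpose (skew h)) (m *\<^sub>R mat 1))"

text \<open>Fixed-base chain: XJ i q = iX_{J_i}(q), XT i = J_iX_{i-1}, Phi i = motion subspace.\<close>
definition fixed_base_chain ::
  "nat \<Rightarrow> (nat \<Rightarrow> real^6) \<Rightarrow> (nat \<Rightarrow> real \<Rightarrow> real^6^6) \<Rightarrow> (nat \<Rightarrow> real^6^6) \<Rightarrow> bool" where
  "fixed_base_chain N Phi XJ XT \<longleftrightarrow>
     (\<forall>i\<in>{1..N}. spatial_transform (XT i)
        \<and> (\<forall>q. spatial_transform (XJ i q))
        \<and> XJ i 0 = mat 1
        \<and> (\<forall>q. (XJ i has_vector_derivative (- (scross (Phi i) ** XJ i q))) (at q)))"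

fun vel :: "(nat \<Rightarrow> real^6) \<Rightarrow> (nat \<Rightarrow> real \<Rightarrow> real^6^6) \<Rightarrow> (nat \<Rightarrow> real^6^6)
            \<Rightarrow> (nat \<Rightarrow> real) \<Rightarrow> (nat \<Rightarrow> real) \<Rightarrow> nat \<Rightarrow> real^6" where
  "vel Phi XJ XT q qd 0 = 0"
| "vel Phi XJ XT q qd (Suc i) =
     (XJ (Suc i) (q (Suc i)) ** XT (Suc i)) *v vel Phi XJ XT q qd i + qd (Suc i) *\<^sub>R Phi (Suc i)"

end

theory Submission
  imports Defs
begin

text \<open>Among the bodies with nonzero inertia, only the last one, body \<open>i\<close>, sees \<open>q\<^sub>i\<close> and
\<open>qd\<^sub>i\<close>, through \<open>v\<^sub>i = X w + s \<Phi>\<^sub>i\<close> with \<open>X = \<^sup>iX\<^sub>J\<^sub>i(q\<^sub>i)\<close>, \<open>s = qd\<^sub>i\<close> and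
\<open>w = \<^sup>J\<^sup>iv\<^sub>i\<^sub>-\<^sub>1\<close>; the energy \<open>P\<close> of bodies \<open>1..i-1\<close> and \<open>w\<close> do not depend on them.
So the total energy is a quadratic polynomial in \<open>s\<close>, and it vanishes identically iff
its three coefficients do. Its linear and quadratic coefficients vanishing is (a). Its constant
coefficient \<open>P + (Xw)\<^sup>T \<delta>I\<^sub>i (Xw)\<close> vanishing for all \<open>q\<^sub>i\<close> is, by comparison with
\<open>q\<^sub>i = 0\<close> where \<open>X = 1\<close>, equivalent to (b) together with (c).\<close>

lemma quadratic_eq_zero_iff:
  fixes a b c :: "'a::field_char_0"
  shows "(\<forall>s. a + s * b + s\<^sup>2 * c = 0) \<longleftrightarrow> a = 0 \<and> b = 0 \<and> c = 0"
proof safe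
  assume H: "\<forall>s. a + s * b + s\<^sup>2 * c = 0"
  from H[rule_format, of 0] H[rule_format, of 1] H[rule_format, of "-1"]
  have "a = 0" "b + c = 0" "c - b = 0" by simp_all
  then show "a = 0" "b = 0" "c = 0" by (simp_all add: eq_neg_iff_add_eq_0 [symmetric])
qed simp_all

lemma affine_eq_zero_iff:
  fixes b c :: "'a::ring_1"
  shows "(\<forall>s. b + s * c = 0) \<longleftrightarrow> b = 0 \<and> c = 0"
proof safe
  assume H: "\<forall>s. b + s * c = 0"
  from H[rule_format, of 0] H[rule_format, of 1] show "b = 0" "c = 0" by simp_all
qed simp_all

lemma inner_symmetric_matrix_commute:
  fixes D :: "real^'n^'n"
  assumes "transpose D = D"
  shows "x \<bullet> (D *v y) = y \<bullet> (D *v x)"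
  by (metis assms dot_lmul_matrix inner_commute vector_transpose_matrix)

lemma quadratic_form_congruence:
  fixes w :: "real^'n"
  shows "(X *v w) \<bullet> (D *v (X *v w)) = w \<bullet> ((transpose X ** D ** X) *v w)"
  by (metis dot_lmul_matrix inner_commute matrix_vector_mul_assoc vector_transpose_matrix)

lemma quadratic_form_add_congruence:
  fixes v :: "real^'n"
  shows "v \<bullet> ((A + transpose X ** D ** X) *v v) = v \<bullet> (A *v v) + (X *v v) \<bullet> (D *v (X *v v))"
  by (simp add: matrix_vector_mult_add_rdistrib inner_add_right quadratic_form_congruence)

lemma quadratic_form_add_scaleR:
  fixes D :: "real^'n^'n"
  assumes "transpose D = D"
  shows "(u + s *\<^sub>R p) \<bullet> (D *v (u + s *\<^sub>R p))
       = u \<bullet> (D *v u) + s * (2 * (p \<bullet> (D *v u))) + s\<^sup>2 * (p \<bullet> (D *v p))"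
  using inner_symmetric_matrix_commute [OF assms, of u p]
  by (simp add: matrix_vector_right_distrib matrix_vector_mult_scaleR inner_add_left
      inner_add_right power2_eq_square algebra_simps)

lemma all_add_eq_zero_iff:
  fixes f :: "'a \<Rightarrow> 'b \<Rightarrow> 'c::ab_group_add"
  shows "(\<forall>x y t. f x y + g x y t = 0)
    \<longleftrightarrow> (\<forall>x y t. g x y t - g x y t\<^sub>0 = 0) \<and> (\<forall>x y. f x y + g x y t\<^sub>0 = 0)"
proof safe
  fix x y t
  assume H: "\<forall>x y t. f x y + g x y t = 0"
  then show "f x y + g x y t\<^sub>0 = 0" by blast
  from H have "g x y t = - f x y" "g x y t\<^sub>0 = - f x y" by (simp_all add: eq_neg_iff_add_eq_0 add.commute)
  then show "g x y t - g x y t\<^sub>0 = 0" by simp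
next
  fix x y t
  assume "\<forall>x y t. g x y t - g x y t\<^sub>0 = 0" "\<forall>x y. f x y + g x y t\<^sub>0 = 0"
  then show "f x y + g x y t = 0" by (metis eq_iff_diff_eq_0)
qed

lemma quadratic_form_separation:
  fixes P :: "'a \<Rightarrow> 'b \<Rightarrow> real" and w :: "'a \<Rightarrow> 'b \<Rightarrow> real^'n"
    and X :: "real \<Rightarrow> real^'n^'n" and D :: "real^'n^'n"
  assumes D_sym: "transpose D = D" and X0: "X 0 = mat 1"
  shows "(\<forall>q qd t s. P q qd + (X t *v w q qd + s *\<^sub>R p) \<bullet> (D *v (X t *v w q qd + s *\<^sub>R p)) = 0)
    \<longleftrightarrow> (\<forall>q qd t s. p \<bullet> (D *v (X t *v w q qd + s *\<^sub>R p)) = 0)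
      \<and> (\<forall>q qd t. w q qd \<bullet> ((transpose (X t) ** D ** X t - D) *v w q qd) = 0)
      \<and> (\<forall>q qd. P q qd + w q qd \<bullet> (D *v w q qd) = 0)"
proof -
  define Q where "Q q qd t = w q qd \<bullet> ((transpose (X t) ** D ** X t) *v w q qd)" for q qd t
  define B where "B q qd t = p \<bullet> (D *v (X t *v w q qd))" for q qd t
  define G where "G = p \<bullet> (D *v p)"
  have Q0: "Q q qd 0 = w q qd \<bullet> (D *v w q qd)" for q qd
    by (simp add: Q_def X0)
  have affine: "(\<forall>q qd t s. p \<bullet> (D *v (X t *v w q qd + s *\<^sub>R p)) = 0)
      \<longleftrightarrow> (\<forall>q qd t. B q qd t = 0 \<and> G = 0)"
    by (simp add: affine_eq_zero_iff B_def G_def matrix_vector_right_distrib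
        matrix_vector_mult_scaleR inner_add_right)
  have congruence: "w q qd \<bullet> ((transpose (X t) ** D ** X t - D) *v w q qd) = Q q qd t - Q q qd 0"
    for q qd t
    by (simp add: Q_def X0 matrix_vector_mult_diff_rdistrib inner_diff_right)
  have "(\<forall>q qd t s. P q qd + (X t *v w q qd + s *\<^sub>R p) \<bullet> (D *v (X t *v w q qd + s *\<^sub>R p)) = 0)
      \<longleftrightarrow> (\<forall>q qd t. P q qd + Q q qd t = 0 \<and> 2 * B q qd t = 0 \<and> G = 0)"
    unfolding quadratic_form_add_scaleR [OF D_sym] quadratic_form_congruence add.assoc [symmetric]
      quadratic_eq_zero_iff Q_def B_def G_def ..
  also have "\<dots> \<longleftrightarrow> (\<forall>q qd t. B q qd t = 0 \<and> G = 0)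
      \<and> (\<forall>q qd t. Q q qd t - Q q qd 0 = 0) \<and> (\<forall>q qd. P q qd + Q q qd 0 = 0)"
    unfolding all_conj_distrib all_add_eq_zero_iff [of P Q 0] by auto
  finally show ?thesis
    unfolding affine congruence Q0 .
qed

lemma all_fun_upd_iff:
  assumes "\<And>q qd t s. F (q(i := t)) (qd(i := s)) t s = F q qd t s"
  shows "(\<forall>q qd. F q qd (q i) (qd i)) \<longleftrightarrow> (\<forall>q qd t s. F q qd t s)"
  by (metis assms fun_upd_same)

lemma quadratic_form_separation_at:
  fixes P :: "('a \<Rightarrow> real) \<Rightarrow> ('a \<Rightarrow> real) \<Rightarrow> real"
    and w :: "('a \<Rightarrow> real) \<Rightarrow> ('a \<Rightarrow> real) \<Rightarrow> real^'n"
    and X :: "real \<Rightarrow> real^'n^'n" and D :: "real^'n^'n"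
  assumes D_sym: "transpose D = D" and X0: "X 0 = mat 1"
    and P_indep: "\<And>q qd t s. P (q(i := t)) (qd(i := s)) = P q qd"
    and w_indep: "\<And>q qd t s. w (q(i := t)) (qd(i := s)) = w q qd"
  shows "(\<forall>q qd. P q qd + (X (q i) *v w q qd + qd i *\<^sub>R p) \<bullet> (D *v (X (q i) *v w q qd + qd i *\<^sub>R p)) = 0)
    \<longleftrightarrow> (\<forall>q qd. p \<bullet> (D *v (X (q i) *v w q qd + qd i *\<^sub>R p)) = 0)
      \<and> (\<forall>q qd. w q qd \<bullet> ((transpose (X (q i)) ** D ** X (q i) - D) *v w q qd) = 0)
      \<and> (\<forall>q qd. P q qd + w q qd \<bullet> (D *v w q qd) = 0)"
  using quadratic_form_separation [OF D_sym, of X P w p] X0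
  by (subst (1 2 3) all_fun_upd_iff [where i = i]) (simp_all add: P_indep w_indep)

lemma exhaust_6:
  fixes x :: 6
  shows "x = 1 \<or> x = 2 \<or> x = 3 \<or> x = 4 \<or> x = 5 \<or> x = 6"
proof (induct x)
  case (of_int z)
  then have "z = 0 \<or> z = 1 \<or> z = 2 \<or> z = 3 \<or> z = 4 \<or> z = 5" by fastforce
  then show ?case by auto
qed

lemma forall_6: "(\<forall>i::6. P i) \<longleftrightarrow> P 1 \<and> P 2 \<and> P 3 \<and> P 4 \<and> P 5 \<and> P 6"
  by (metis exhaust_6)

lemma vector_6_nth:
  "(vector [a, b, c, d, e, f] :: real^6) $ 1 = a" "(vector [a, b, c, d, e, f] :: real^6) $ 2 = b"
  "(vector [a, b, c, d, e, f] :: real^6) $ 3 = c" "(vector [a, b, c, d, e, f] :: real^6) $ 4 = d"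
  "(vector [a, b, c, d, e, f] :: real^6) $ 5 = e" "(vector [a, b, c, d, e, f] :: real^6) $ 6 = f"
  by (simp_all add: vector_def)

lemma inertia_hat_symmetric: "transpose (inertia_hat p) = inertia_hat p"
  unfolding inertia_hat_def Let_def blockmat_def
  by (simp add: vec_eq_iff transpose_def matrix_def forall_6 forall_3 stack6_def top3_def bot3_def
      skew_def cross3_def axis_def matrix_vector_mult_def sum_3 mat_def vector_6_nth)

lemma vel_fun_upd_below:
  "j < i \<Longrightarrow> vel Phi XJ XT (q(i := t)) (qd(i := s)) j = vel Phi XJ XT q qd j"
  by (induction j) auto

lemma sum_atLeastAtMost_trailing_zeros:
  fixes f :: "nat \<Rightarrow> 'a::comm_monoid_add"
  assumes "1 \<le> i" "i \<le> N" and "\<And>j. i < j \<Longrightarrow> j \<le> N \<Longrightarrow> f j = 0"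
  shows "(\<Sum>j=1..N. f j) = (\<Sum>j=1..i-1. f j) + f i"
proof -
  have "(\<Sum>j=1..N. f j) = (\<Sum>j=1..i. f j)"
    using assms by (intro sum.mono_neutral_right) auto
  also have "\<dots> = (\<Sum>j=1..i-1. f j) + f i"
    using \<open>1 \<le> i\<close> by (cases i) (simp_all add: sum.cl_ivl_Suc)
  finally show ?thesis .
qed

theorem mainTheorem7:
  fixes N i :: nat
    and Phi :: "nat \<Rightarrow> real^6"
    and XJ :: "nat \<Rightarrow> real \<Rightarrow> real^6^6"
    and XT :: "nat \<Rightarrow> real^6^6"
    and dpi :: "nat \<Rightarrow> real^10"
  assumes chain: "fixed_base_chain N Phi XJ XT"
    and i_ge: "2 \<le> i" and i_le: "i \<le> N"
    and zero_after: "\<forall>j. i < j \<and> j \<le> N \<longrightarrow> inertia_hat (dpi j) = 0"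
  shows "(\<forall>q qd. (\<Sum>j=1..N. vel Phi XJ XT q qd j \<bullet> (inertia_hat (dpi j) *v vel Phi XJ XT q qd j)) = 0)
    \<longleftrightarrow>
     (\<forall>q qd. Phi i \<bullet> (inertia_hat (dpi i) *v vel Phi XJ XT q qd i) = 0)
   \<and> (\<forall>q qd. (XT i *v vel Phi XJ XT q qd (i - 1)) \<bullet>
          ((transpose (XJ i (q i)) ** inertia_hat (dpi i) ** XJ i (q i) - inertia_hat (dpi i))
             *v (XT i *v vel Phi XJ XT q qd (i - 1))) = 0)
   \<and> (\<forall>q qd. (\<Sum>j=1..i-2. vel Phi XJ XT q qd j \<bullet> (inertia_hat (dpi j) *v vel Phi XJ XT q qd j))
          + vel Phi XJ XT q qd (i - 1) \<bullet>
              ((inertia_hat (dpi (i - 1)) + transpose (XT i) ** inertia_hat (dpi i) ** XT i)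
                 *v vel Phi XJ XT q qd (i - 1)) = 0)"
proof -
  define T where "T q qd j = vel Phi XJ XT q qd j \<bullet> (inertia_hat (dpi j) *v vel Phi XJ XT q qd j)"
    for q qd j
  define P where "P q qd = (\<Sum>j=1..i-1. T q qd j)" for q qd
  define w where "w q qd = XT i *v vel Phi XJ XT q qd (i - 1)" for q qd
  have vel_i: "vel Phi XJ XT q qd i = XJ i (q i) *v w q qd + qd i *\<^sub>R Phi i" for q qd
    using i_ge vel.simps(2) [of Phi XJ XT q qd "i - 1"]
    by (simp add: w_def matrix_vector_mul_assoc)
  have total_energy: "(\<Sum>j=1..N. T q qd j) = P q qd + T q qd i" for q qd
    unfolding P_def using i_ge i_le zero_after
    by (intro sum_atLeastAtMost_trailing_zeros) (auto simp: T_def)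
  have condition_c: "(\<Sum>j=1..i-2. T q qd j) + vel Phi XJ XT q qd (i - 1) \<bullet>
      ((inertia_hat (dpi (i - 1)) + transpose (XT i) ** inertia_hat (dpi i) ** XT i)
         *v vel Phi XJ XT q qd (i - 1)) = P q qd + w q qd \<bullet> (inertia_hat (dpi i) *v w q qd)" for q qd
    using sum_atLeastAtMost_trailing_zeros [of "i - 1" "i - 1" "T q qd"] i_ge
    by (simp add: P_def T_def w_def numeral_2_eq_2 quadratic_form_add_congruence)
  have XJ0: "XJ i 0 = mat 1"
    using chain i_ge i_le by (simp add: fixed_base_chain_def)
  have P_indep: "P (q(i := t)) (qd(i := s)) = P q qd" for q qd t s
    unfolding P_def T_def by (intro sum.cong refl) (use i_ge in \<open>auto simp: vel_fun_upd_below\<close>)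
  have w_indep: "w (q(i := t)) (qd(i := s)) = w q qd" for q qd t s
    using i_ge by (simp add: w_def vel_fun_upd_below)
  from quadratic_form_separation_at [where D = "inertia_hat (dpi i)" and X = "XJ i" and P = P
      and w = w and i = i and p = "Phi i", OF inertia_hat_symmetric XJ0 P_indep w_indep]
  show ?thesis
    unfolding T_def [symmetric] total_energy condition_c w_def [symmetric] by (simp add: T_def vel_i)
qed

end
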